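(* Let $d>r\ge1$, and let $u,v$ be partitions with $l(u)\le r$, $u_1\le d-r$ and $l(v)=r$. Let $(w,b)\in LR(\chi(u),v)$ be such that $(w,\tilde u)$ is admissible, and let $\rho=\psi(w,\tilde u)$. Then either (1) $u=0$ and $\rho=v$, or (2) $|u|+i(w,\tilde u)+1+\|v\|^2\le\|\rho\|^2$.
   Context: A generalized partition of length $r$ is a weakly decreasing sequence of $r$ integers with diagram $\mathcal D(u)=\{(i,j)\in\{1,..,r\}\times\mathbb Z: j\le u_i\}$; $w/u$ is a skew partition if $\mathcal D(u)\subset\mathcal D(w)$, and $\mathcal D(w/u)=\mathcal D(w)\setminus\mathcal D(u)$. For a partition $u$ of length $\le r$, $\chi(u)=(-u_r,\dots,-u_1)$. $Y(v)=\{(i,j):1\le j\le v_i\}$. LR order on $\mathcal D(w/u)$: $(i,j)<_{LR}(i',j')$ if $i<i'$, and $(i,j)<_{LR}(i,j')$ if $j>j'$. A bijection $c=(c_1,c_2):\mathcal D(w/u)\to Y(v)$ satisfies the LR rules iff $c_1$ is strictly increasing in the height on each column, weakly increasing in the width on each row, and for each $x$ the set $\{c(y):y\le_{LR}x\}$ is a Young diagram. $LR(\chi(u),v)$ is the set of pairs $(w,b)$ with $w$ a generalized partition of length $r$, $\mathcal D(\chi(u))\subset\mathcal D(w)$, and $b:Y(v)\to\mathcal D(w/\chi(u))$ a bijection whose inverse satisfies the LR rules. $\tilde u$ is the transpose of $u$, viewed as $(\tilde u_1,..,\tilde u_{d-r})$; for $a=(w,\tilde u)\in\mathbb Z^d$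 and $I(d)=(1,..,d)$: admissible means the entries of $a-I(d)$ are pairwise distinct, $\psi(a)=(a-I(d))^{\ge}+I(d)$ ($\ge$ = weakly decreasing rearrangement), $i(a)=\operatorname{card}\{(i,j):i<j,(a-I(d))_i<(a-I(d))_j\}$. $|u|=\sum u_i$, $\|u\|^2=\sum_j\tilde u_j^2$, $l(u)$ = number of nonzero parts. *)

theory Defs
  imports Main
begin

(* Conventions: sequences are int lists, entries are 1-indexed in the paper,
   so the paper's u_i is  u ! (i - 1).  Cells of diagrams are pairs
   (row, column) :: nat \<times> int. *)

definition gen_partition :: "nat \<Rightarrow> int list \<Rightarrow> bool" where
  "gen_partition r w \<longleftrightarrow> length w = r \<and> sorted_wrt (\<ge>) w"

definition is_partition :: "int list \<Rightarrow> bool" where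
  "is_partition u \<longleftrightarrow> sorted_wrt (\<ge>) u \<and> (\<forall>x\<in>set u. 0 \<le> x)"

definition plen :: "int list \<Rightarrow> nat" where
  "plen u = card {i. i < length u \<and> u ! i \<noteq> 0}"

definition chi :: "int list \<Rightarrow> int list" where
  "chi u = rev (map uminus u)"

definition diagram :: "int list \<Rightarrow> (nat \<times> int) set" where
  "diagram u = {(i, j). 1 \<le> i \<and> i \<le> length u \<and> j \<le> u ! (i - 1)}"

definition skew_diagram :: "int list \<Rightarrow> int list \<Rightarrow> (nat \<times> int) set" where
  "skew_diagram w u = diagram w - diagram u"

definition young :: "int list \<Rightarrow> (nat \<times> int) set" where
  "young v = {(i, j). 1 \<le> i \<and> i \<le> length v \<and> 1 \<le> j \<and> j \<le> v ! (i - 1)}"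

definition is_young_diagram :: "(nat \<times> int) set \<Rightarrow> bool" where
  "is_young_diagram S \<longleftrightarrow> (\<exists>lam. is_partition lam \<and> S = young lam)"

definition lr_less :: "nat \<times> int \<Rightarrow> nat \<times> int \<Rightarrow> bool" where
  "lr_less x y \<longleftrightarrow> fst x < fst y \<or> (fst x = fst y \<and> snd x > snd y)"

definition lr_le :: "nat \<times> int \<Rightarrow> nat \<times> int \<Rightarrow> bool" where
  "lr_le x y \<longleftrightarrow> lr_less x y \<or> x = y"

definition LR_rules :: "(nat \<times> int \<Rightarrow> nat \<times> int) \<Rightarrow> (nat \<times> int) set \<Rightarrow> (nat \<times> int) set \<Rightarrow> bool" where
  "LR_rules c D Y \<longleftrightarrow> bij_betw c D Y
    \<and> (\<forall>x\<in>D. \<forall>y\<in>D. snd x = snd y \<and> fst x < fst y \<longrightarrow> fst (c x) < fst (c y))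
    \<and> (\<forall>x\<in>D. \<forall>y\<in>D. fst x = fst y \<and> snd x < snd y \<longrightarrow> fst (c x) \<le> fst (c y))
    \<and> (\<forall>x\<in>D. is_young_diagram (c ` {y\<in>D. lr_le y x}))"

definition LR :: "nat \<Rightarrow> int list \<Rightarrow> int list \<Rightarrow> (int list \<times> (nat \<times> int \<Rightarrow> nat \<times> int)) set" where
  "LR r x v = {(w, b). gen_partition r w \<and> diagram x \<subseteq> diagram w
      \<and> bij_betw b (young v) (skew_diagram w x)
      \<and> LR_rules (the_inv_into (young v) b) (skew_diagram w x) (young v)}"

(* transpose of u, viewed as (tilde u_1, ..., tilde u_n) *)
definition conj_part :: "nat \<Rightarrow> int list \<Rightarrow> int list" where
  "conj_part n u = map (\<lambda>j. int (card {i. i < length u \<and> int j \<le> u ! i})) [1..<n+1]"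

definition shiftI :: "int list \<Rightarrow> int list" where
  "shiftI a = map (\<lambda>k. a ! k - int (k + 1)) [0..<length a]"

definition admissible :: "int list \<Rightarrow> bool" where
  "admissible a \<longleftrightarrow> distinct (shiftI a)"

definition psi :: "int list \<Rightarrow> int list" where
  "psi a = map (\<lambda>k. rev (sort (shiftI a)) ! k + int (k + 1)) [0..<length a]"

definition inv_count :: "int list \<Rightarrow> nat" where
  "inv_count a = card {(i, j). i < j \<and> j < length a \<and> shiftI a ! i < shiftI a ! j}"

definition psize :: "int list \<Rightarrow> int" where
  "psize u = sum_list u"

definition norm2 :: "int list \<Rightarrow> int" where
  "norm2 u = (\<Sum>j\<in>{1..Max (insert 0 (set u))}. int (card {i. i < length u \<and> j \<le> u ! i}) ^ 2)"

end

theory Submission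
  imports Defs
begin

text \<open>
  Write \<open>a = (w, u')\<close> with \<open>u'\<close> the transpose of \<open>u\<close>, and \<open>s = a - I(d)\<close>. On weakly decreasing
  lists \<open>norm2\<close> equals the weighted size \<open>\<Sum>\<^sub>k (2k + 1) l\<^sub>k\<close> (indices from \<open>0\<close>), on nonnegative
  lists it is at most that, and sorting \<open>s\<close> lowers the weighted size by twice the total gap
  \<open>\<Sum> (s\<^sub>j - s\<^sub>i)\<close> of the inversions of \<open>s\<close>. Since \<open>w\<close> and \<open>u'\<close> are decreasing, an inversion
  pairs a row \<open>i\<close> of \<open>w\<close> with one of the first \<open>p\<^sub>i = -\<chi>(u)\<^sub>i\<close> entries of \<open>u'\<close>. Comparing each
  row with an empty one bounds \<open>\<parallel>\<rho>\<parallel>\<^sup>2 - \<parallel>v\<parallel>\<^sup>2 - |u| - i(a)\<close> from below by an excess: the rows' savings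
  minus \<open>2 p\<^sub>i\<close>, plus twice the dominance weight \<open>\<Sum> i (e\<^sub>i - v\<^sub>i)\<close>, where \<open>e\<^sub>i\<close> are the row lengths
  of the skew diagram. The LR rules make \<open>v\<close> dominate \<open>e\<close>, and with the monotonicity of
  \<open>p\<^sub>i - e\<^sub>i\<close> this bounds the excess below by twice the dominance weight plus the number of rows
  with \<open>p\<^sub>i \<ge> 1\<close> and \<open>e\<^sub>i \<ge> 2\<close>. It is positive unless \<open>u = 0\<close> and \<open>w = v\<close>: at the first row with
  \<open>p\<^sub>i \<ge> 1\<close>, \<open>e\<^sub>i = 0\<close> forces a dominance defect, \<open>e\<^sub>i \<ge> 2\<close> a strict saving, and \<open>e\<^sub>i = 1\<close> would make
  \<open>s\<close> repeat a value, against admissibility.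
\<close>

lemma int_card_filter_lessThan:
  fixes n :: nat
  shows "int (card {i. i < n \<and> P i}) = (\<Sum>k<n. if P k then 1 else 0)"
proof -
  have "{i. i < n \<and> P i} = {k\<in>{..<n}. P k}" by auto
  then have "card {i. i < n \<and> P i} = (\<Sum>k\<in>{k\<in>{..<n}. P k}. 1)" by simp
  also have "\<dots> = (\<Sum>k<n. if P k then 1 else 0)"
    by (rule sum.inter_filter) simp
  finally show ?thesis by (simp add: of_nat_sum of_bool_def[symmetric])
qed

lemma int_card_pairs_less:
  fixes n :: nat
  shows "int (card {(i, j). i < j \<and> j < n \<and> P i j}) = (\<Sum>i<n. \<Sum>j<n. if i < j \<and> P i j then 1 else 0)"
proof -
  have "{(i, j). i < j \<and> j < n \<and> P i j} = {x \<in> {..<n} \<times> {..<n}. fst x < snd x \<and> P (fst x) (snd x)}"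
    by auto
  then have "card {(i, j). i < j \<and> j < n \<and> P i j}
      = (\<Sum>x\<in>{..<n} \<times> {..<n}. if fst x < snd x \<and> P (fst x) (snd x) then 1 else 0)"
    by (simp add: sum.inter_filter[symmetric])
  also have "\<dots> = (\<Sum>i<n. \<Sum>j<n. if i < j \<and> P i j then 1 else 0)"
    by (simp add: sum.cartesian_product split_beta)
  finally show ?thesis by (simp add: of_nat_sum of_bool_def[symmetric])
qed

lemma sum_lessThan_add:
  fixes g :: "nat \<Rightarrow> 'a::comm_monoid_add"
  shows "(\<Sum>i<m + n. g i) = (\<Sum>i<m. g i) + (\<Sum>j<n. g (m + j))"
  by (induction n) (simp_all add: add.assoc)

lemma sum_double_lessThan: "(\<Sum>j<m. 2 * int j) = int m * (int m - 1)"
  by (induction m) (simp_all add: algebra_simps)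

lemma sum_indicator_less:
  fixes z :: int
  assumes "0 \<le> z"
  shows "(\<Sum>j<m. if int j < z then 1 else 0) = min (int m) z"
proof -
  have "{j. j < m \<and> int j < z} = {..<min m (nat z)}" using assms by auto
  then show ?thesis using int_card_filter_lessThan[of m "\<lambda>j. int j < z"] assms by auto
qed

lemma sum_double_less:
  fixes z :: int
  assumes "0 \<le> z" "z \<le> int n"
  shows "(\<Sum>j<n. if int j < z then 2 * int j else 0) = z * (z - 1)"
proof -
  have "{j\<in>{..<n}. int j < z} = {..<nat z}" using assms by auto
  then show ?thesis using sum_double_lessThan[of "nat z"] assms by (simp add: sum.inter_filter[symmetric])
qed

lemma sum_partial_sums:
  fixes g :: "nat \<Rightarrow> int"
  shows "(\<Sum>k<m. \<Sum>i<Suc k. g i) = (\<Sum>i<m. int (m - i) * g i)"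
proof (induction m)
  case (Suc m)
  have "(\<Sum>i<Suc m. int (Suc m - i) * g i) = (\<Sum>i<Suc m. int (m - i) * g i + g i)"
    by (intro sum.cong refl) (auto simp: Suc_diff_le algebra_simps)
  then show ?case using Suc by (simp add: sum.distrib)
qed simp

lemma sum_sum_max:
  fixes f :: "nat \<Rightarrow> int"
  shows "(\<Sum>k<N. \<Sum>m<N. f (max k m)) = (\<Sum>m<N. (2 * int m + 1) * f m)"
proof (induction N)
  case (Suc N)
  have "(\<Sum>k<Suc N. \<Sum>m<Suc N. f (max k m))
      = (\<Sum>k<N. (\<Sum>m<N. f (max k m)) + f N) + (\<Sum>m<N. f N) + f N"
    by (simp add: max_def sum.distrib algebra_simps)
  also have "\<dots> = (\<Sum>m<Suc N. (2 * int m + 1) * f m)"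
    using Suc.IH by (simp add: sum.distrib algebra_simps)
  finally show ?case .
qed simp

lemma sum_rev_nth:
  assumes "length l = r"
  shows "(\<Sum>i<r. f i (rev l ! i)) = (\<Sum>k<r. f (r - 1 - k) (l ! k))"
proof -
  have "(\<Sum>k<r. f (r - 1 - k) (l ! k)) = (\<Sum>i<r. f (r - 1 - (r - Suc i)) (l ! (r - Suc i)))"
    by (rule sum.nat_diff_reindex[symmetric])
  also have "\<dots> = (\<Sum>i<r. f i (rev l ! i))"
    using assms by (intro sum.cong refl) (auto simp: rev_nth)
  finally show ?thesis by simp
qed

section \<open>Weighted size\<close>

definition wsize :: "int list \<Rightarrow> int" where
  "wsize l = (\<Sum>k<length l. (2 * int k + 1) * l ! k)"

lemma wsize_append:
  "wsize (l @ l') = wsize l + (\<Sum>j<length l'. (2 * int (length l + j) + 1) * l' ! j)"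
  unfolding wsize_def length_append sum_lessThan_add by (simp add: nth_append)

lemma wsize_rev:
  assumes "length l = r"
  shows "(\<Sum>i<r. (2 * int (r - 1 - i) + 1) * rev l ! i) = wsize l"
  using sum_rev_nth[OF assms, of "\<lambda>i x. (2 * int (r - 1 - i) + 1) * x"] assms
  by (simp add: wsize_def Suc_diff_Suc)

lemma norm2_eq_sum_min:
  "norm2 l = (\<Sum>k<length l. \<Sum>m<length l. max 0 (min (l ! k) (l ! m)))"
proof -
  define M where "M = Max (insert 0 (set l))"
  have le_M: "l ! k \<le> M" if "k < length l" for k
    unfolding M_def using that by (intro Max_ge) auto
  have count: "(\<Sum>j\<in>{1..M}. if j \<le> z then 1 else 0 :: int) = max 0 z" if "z \<le> M" for z
  proof -
    have "{j\<in>{1..M}. j \<le> z} = {1..z}" using that by auto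
    then show ?thesis by (simp add: sum.inter_filter[symmetric])
  qed
  have "norm2 l = (\<Sum>j\<in>{1..M}. (\<Sum>k<length l. if j \<le> l ! k then 1 else 0) ^ 2)"
    unfolding norm2_def M_def by (simp add: int_card_filter_lessThan)
  also have "\<dots> = (\<Sum>j\<in>{1..M}. \<Sum>k<length l. \<Sum>m<length l. if j \<le> min (l ! k) (l ! m) then 1 else 0 :: int)"
    by (simp only: power2_eq_square sum_product) (intro sum.cong refl, simp)
  also have "\<dots> = (\<Sum>k<length l. \<Sum>m<length l. \<Sum>j\<in>{1..M}. if j \<le> min (l ! k) (l ! m) then 1 else 0 :: int)"
    by (subst sum.swap) (rule sum.cong[OF refl], rule sum.swap)
  also have "\<dots> = (\<Sum>k<length l. \<Sum>m<length l. max 0 (min (l ! k) (l ! m)))"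
    by (intro sum.cong refl count) (use le_M in \<open>auto simp: min_le_iff_disj\<close>)
  finally show ?thesis .
qed

lemma norm2_le_wsize:
  assumes "\<forall>x\<in>set l. 0 \<le> x"
  shows "norm2 l \<le> wsize l"
proof -
  have "norm2 l \<le> (\<Sum>k<length l. \<Sum>m<length l. l ! (max k m))"
    unfolding norm2_eq_sum_min
  proof (intro sum_mono)
    fix k m assume "k \<in> {..<length l}" "m \<in> {..<length l}"
    then have "0 \<le> l ! k" "0 \<le> l ! m" using assms by auto
    then show "max 0 (min (l ! k) (l ! m)) \<le> l ! max k m"
      by (cases "k \<le> m") (simp_all add: max_def min_def)
  qed
  then show ?thesis by (simp add: sum_sum_max wsize_def)
qed

lemma wsize_le_norm2:
  assumes "sorted_wrt (\<ge>) l"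
  shows "wsize l \<le> norm2 l"
proof -
  have "wsize l = (\<Sum>k<length l. \<Sum>m<length l. l ! (max k m))"
    by (simp add: sum_sum_max wsize_def)
  also have "\<dots> \<le> norm2 l"
    unfolding norm2_eq_sum_min
  proof (intro sum_mono)
    fix k m assume "k \<in> {..<length l}" "m \<in> {..<length l}"
    then show "l ! max k m \<le> max 0 (min (l ! k) (l ! m))"
      using assms by (cases k m rule: linorder_cases) (auto simp: sorted_wrt_iff_nth_less)
  qed
  finally show ?thesis .
qed

section \<open>Sorting the shifted sequence\<close>

lemma length_shiftI [simp]: "length (shiftI a) = length a"
  by (simp add: shiftI_def)

lemma shiftI_nth: "k < length a \<Longrightarrow> shiftI a ! k = a ! k - int (k + 1)"
  by (simp add: shiftI_def)

lemma length_psi [simp]: "length (psi a) = length a"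
  by (simp add: psi_def)

lemma psi_nth: "k < length a \<Longrightarrow> psi a ! k = rev (sort (shiftI a)) ! k + int (k + 1)"
  by (simp add: psi_def)

lemma sorted_greater_rev_sort:
  fixes xs :: "'a::linorder list"
  assumes "distinct xs"
  shows "sorted_wrt (>) (rev (sort xs))"
proof -
  have "sorted_wrt (<) (sort xs)" using assms by (simp add: strict_sorted_iff)
  then show ?thesis by (simp add: sorted_wrt_rev)
qed

lemma sorted_greater_nth_gap:
  fixes xs :: "int list"
  assumes "sorted_wrt (>) xs" "k \<le> m" "m < length xs"
  shows "xs ! m + int (m - k) \<le> xs ! k"
  using assms(2,3)
proof (induction m rule: dec_induct)
  case (step m)
  have "xs ! Suc m < xs ! m" using assms(1) step by (simp add: sorted_wrt_iff_nth_less)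
  then show ?case using step by (simp add: of_nat_diff)
qed simp

lemma sorted_psi:
  assumes "distinct (shiftI a)"
  shows "sorted_wrt (\<ge>) (psi a)"
  unfolding sorted_wrt_iff_nth_less
proof (intro allI impI)
  fix k m assume "k < m" "m < length (psi a)"
  then show "psi a ! m \<le> psi a ! k"
    using sorted_greater_nth_gap[OF sorted_greater_rev_sort[OF assms], of k m]
    by (simp add: psi_nth of_nat_diff)
qed

lemma sorted_greater_shiftI:
  assumes "sorted_wrt (\<ge>) a"
  shows "sorted_wrt (>) (shiftI a)"
  unfolding sorted_wrt_iff_nth_less
proof (intro allI impI)
  fix i j assume "i < j" "j < length (shiftI a)"
  moreover from this have "a ! j \<le> a ! i" using assms by (simp add: sorted_wrt_iff_nth_less)
  ultimately show "shiftI a ! j < shiftI a ! i" by (simp add: shiftI_nth)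
qed

lemma psi_eq_self:
  assumes "sorted_wrt (\<ge>) a"
  shows "psi a = a"
proof -
  have "sorted_wrt (<) (rev (shiftI a))"
    using sorted_greater_shiftI[OF assms] by (simp add: sorted_wrt_rev)
  then have "sort (shiftI a) = rev (shiftI a)"
    by (intro sorted_distinct_set_unique) (auto simp: strict_sorted_iff)
  then show ?thesis by (intro nth_equalityI) (simp_all add: psi_nth shiftI_nth)
qed

lemma card_greater_sorted_greater:
  fixes xs :: "'a::linorder list"
  assumes "sorted_wrt (>) xs" "k < length xs"
  shows "card {l. l < length xs \<and> xs ! l > xs ! k} = k"
proof -
  have "{l. l < length xs \<and> xs ! l > xs ! k} = {..<k}"
  proof (intro set_eqI iffI)
    fix l assume l: "l \<in> {l. l < length xs \<and> xs ! l > xs ! k}"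
    then have "\<not> k < l" "k \<noteq> l"
      using sorted_wrt_nth_less[OF assms(1), of k l] by auto
    then show "l \<in> {..<k}" by simp
  qed (use assms in \<open>auto simp: sorted_wrt_iff_nth_less\<close>)
  then show ?thesis by simp
qed

lemma card_greater_set_eq_card_greater_nth:
  assumes "distinct xs" "k < length xs"
  shows "card {y \<in> set xs. y > xs ! k} = card {l. l < length xs \<and> xs ! l > xs ! k}"
proof -
  have "{y \<in> set xs. y > xs ! k} = nth xs ` {l. l < length xs \<and> xs ! l > xs ! k}"
    by (auto simp: in_set_conv_nth)
  moreover have "inj_on (nth xs) {l. l < length xs \<and> xs ! l > xs ! k}"
    using assms by (auto simp: inj_on_def nth_eq_iff_index_eq)
  ultimately show ?thesis by (simp add: card_image)
qed

lemma sum_nth_distinct: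
  assumes "distinct xs"
  shows "(\<Sum>k<length xs. f (xs ! k)) = (\<Sum>x\<in>set xs. f x)"
  using assms by (simp add: sum.distinct_set_conv_list sum_list_sum_nth atLeast0LessThan)

lemma rank_minus_index_mult:
  fixes s :: "nat \<Rightarrow> int"
  assumes inj: "inj_on s {..<n}" and k: "k < n"
  shows "(int (card {l. l < n \<and> s l > s k}) - int k) * s k =
      (\<Sum>l<n. if k < l \<and> s k < s l then s k else 0) - (\<Sum>l<n. if l < k \<and> s l < s k then s k else 0)"
proof -
  have "{l. l < n \<and> l < k} = {..<k}" using k by auto
  then have k_count: "int k = (\<Sum>l<n. if l < k then 1 else 0)"
    using int_card_filter_lessThan[of n "\<lambda>l. l < k"] by simp
  have "(int (card {l. l < n \<and> s l > s k}) - int k) * s k =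
      (\<Sum>l<n. ((if s l > s k then 1 else 0) - (if l < k then 1 else 0)) * s k)"
    unfolding int_card_filter_lessThan k_count by (simp only: sum_subtractf[symmetric] sum_distrib_right)
  also have "\<dots> = (\<Sum>l<n. (if k < l \<and> s k < s l then s k else 0) - (if l < k \<and> s l < s k then s k else 0))"
  proof (intro sum.cong refl)
    fix l assume l: "l \<in> {..<n}"
    show "((if s l > s k then 1 else 0) - (if l < k then 1 else 0)) * s k =
          (if k < l \<and> s k < s l then s k else 0) - (if l < k \<and> s l < s k then s k else 0)"
    proof (cases "l = k")
      case False
      then have "s l \<noteq> s k" using inj l k by (auto simp: inj_on_def)
      then show ?thesis using False by (auto simp: not_less_iff_gr_or_eq)
    qed simp
  qed
  finally show ?thesis by (simp add: sum_subtractf)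
qed

text \<open>Placing the values \<open>s k\<close> in decreasing order moves each one to the position given by
  its rank; every increasing pair \<open>s i < s j\<close> with \<open>i < j\<close> then changes the weighted sum
  by \<open>2 (s j - s i)\<close>.\<close>

lemma sum_rank_weighted:
  fixes s :: "nat \<Rightarrow> int"
  assumes inj: "inj_on s {..<n}"
  shows "(\<Sum>k<n. (2 * int (card {l. l < n \<and> s l > s k}) + 1) * s k)
       = (\<Sum>k<n. (2 * int k + 1) * s k)
         - 2 * (\<Sum>i<n. \<Sum>j<n. if i < j \<and> s i < s j then s j - s i else 0)"
proof -
  have "(\<Sum>k<n. (2 * int (card {l. l < n \<and> s l > s k}) + 1) * s k) - (\<Sum>k<n. (2 * int k + 1) * s k)
      = 2 * (\<Sum>k<n. (int (card {l. l < n \<and> s l > s k}) - int k) * s k)"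
    by (simp add: sum_subtractf[symmetric] sum_distrib_left algebra_simps)
  also have "\<dots> = 2 * ((\<Sum>i<n. \<Sum>j<n. if i < j \<and> s i < s j then s i else 0)
                     - (\<Sum>k<n. \<Sum>l<n. if l < k \<and> s l < s k then s k else 0))"
    using rank_minus_index_mult[OF inj] by (simp add: sum_subtractf)
  also have "(\<Sum>k<n. \<Sum>l<n. if l < k \<and> s l < s k then s k else 0)
           = (\<Sum>i<n. \<Sum>j<n. if i < j \<and> s i < s j then s j else 0)"
    by (rule sum.swap)
  also have "(\<Sum>i<n. \<Sum>j<n. if i < j \<and> s i < s j then s i else 0)
             - (\<Sum>i<n. \<Sum>j<n. if i < j \<and> s i < s j then s j else 0)
           = - (\<Sum>i<n. \<Sum>j<n. if i < j \<and> s i < s j then s j - s i else 0)"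
    by (simp add: sum_subtractf[symmetric] sum_negf[symmetric] if_distrib cong: if_cong)
  finally show ?thesis by simp
qed

definition inv_gap :: "int list \<Rightarrow> int" where
  "inv_gap a = (\<Sum>i<length a. \<Sum>j<length a.
     if i < j \<and> shiftI a ! i < shiftI a ! j then shiftI a ! j - shiftI a ! i else 0)"

lemma int_inv_count:
  "int (inv_count a) = (\<Sum>i<length a. \<Sum>j<length a. if i < j \<and> shiftI a ! i < shiftI a ! j then 1 else 0)"
  unfolding inv_count_def by (rule int_card_pairs_less)

lemma sum_increasing_pairs_two_blocks:
  fixes s :: "nat \<Rightarrow> int" and f :: "nat \<Rightarrow> nat \<Rightarrow> int"
  assumes first: "\<And>i j. i < j \<Longrightarrow> j < m \<Longrightarrow> s j \<le> s i"
    and second: "\<And>i j. m \<le> i \<Longrightarrow> i < j \<Longrightarrow> j < m + n \<Longrightarrow> s j \<le> s i"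
  shows "(\<Sum>i<m + n. \<Sum>j<m + n. if i < j \<and> s i < s j then f i j else 0)
       = (\<Sum>i<m. \<Sum>j<n. if s i < s (m + j) then f i (m + j) else 0)"
proof -
  let ?g = "\<lambda>i j. if i < j \<and> s i < s j then f i j else 0"
  have within_first: "(\<Sum>j<m. ?g i j) = 0" if "i < m" for i
    using first that by (intro sum.neutral) force
  have within_second: "(\<Sum>j<m. ?g (m + i) j) + (\<Sum>j<n. ?g (m + i) (m + j)) = 0" for i
  proof -
    have "\<not> (i < j \<and> s (m + i) < s (m + j))" if "j < n" for j
      using second[of "m + i" "m + j"] that by auto
    then have "(\<Sum>j<n. ?g (m + i) (m + j)) = 0" by (intro sum.neutral) auto
    then show ?thesis by simp
  qed
  have "(\<Sum>i<m + n. \<Sum>j<m + n. ?g i j)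
      = (\<Sum>i<m. (\<Sum>j<m. ?g i j) + (\<Sum>j<n. ?g i (m + j)))
        + (\<Sum>i<n. (\<Sum>j<m. ?g (m + i) j) + (\<Sum>j<n. ?g (m + i) (m + j)))"
    by (simp only: sum_lessThan_add)
  also have "\<dots> = (\<Sum>i<m. \<Sum>j<n. ?g i (m + j))"
    using within_first within_second by simp
  finally show ?thesis by simp
qed

lemma weighted_sum_rev_sort:
  fixes xs :: "int list"
  assumes ds: "distinct xs"
  shows "(\<Sum>k<length xs. (2 * int k + 1) * rev (sort xs) ! k)
       = (\<Sum>k<length xs. (2 * int (card {l. l < length xs \<and> xs ! l > xs ! k}) + 1) * xs ! k)"
proof -
  define n where "n = length xs"
  define \<sigma> where "\<sigma> = rev (sort xs)"
  define rank where "rank x = card {y \<in> set xs. y > x}" for x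
  have d\<sigma>: "distinct \<sigma>" and set\<sigma>: "set \<sigma> = set xs" and len: "length \<sigma> = n"
    using ds by (simp_all add: \<sigma>_def n_def)
  have sorted\<sigma>: "sorted_wrt (>) \<sigma>"
    unfolding \<sigma>_def by (rule sorted_greater_rev_sort[OF ds])
  have "(\<Sum>k<n. (2 * int k + 1) * \<sigma> ! k) = (\<Sum>k<length \<sigma>. (2 * int (rank (\<sigma> ! k)) + 1) * \<sigma> ! k)"
    using card_greater_set_eq_card_greater_nth[OF d\<sigma>] card_greater_sorted_greater[OF sorted\<sigma>]
    by (intro sum.cong) (simp_all add: len rank_def set\<sigma>[symmetric])
  also have "\<dots> = (\<Sum>k<n. (2 * int (rank (xs ! k)) + 1) * xs ! k)"
    using sum_nth_distinct[OF d\<sigma>, of "\<lambda>x. (2 * int (rank x) + 1) * x"]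
      sum_nth_distinct[OF ds, of "\<lambda>x. (2 * int (rank x) + 1) * x"] set\<sigma> by (simp add: n_def)
  also have "\<dots> = (\<Sum>k<n. (2 * int (card {l. l < n \<and> xs ! l > xs ! k}) + 1) * xs ! k)"
  proof (intro sum.cong refl)
    fix k assume "k \<in> {..<n}"
    then have "rank (xs ! k) = card {l. l < n \<and> xs ! l > xs ! k}"
      unfolding rank_def n_def using card_greater_set_eq_card_greater_nth[OF ds, of k] by simp
    then show "(2 * int (rank (xs ! k)) + 1) * xs ! k = (2 * int (card {l. l < n \<and> xs ! l > xs ! k}) + 1) * xs ! k"
      by simp
  qed
  finally show ?thesis by (simp add: n_def \<sigma>_def)
qed

lemma wsize_psi:
  assumes dist: "distinct (shiftI a)"
  shows "wsize (psi a) = wsize a - 2 * inv_gap a"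
proof -
  define n where "n = length a"
  define s where "s = shiftI a"
  have len: "length s = n" by (simp add: s_def n_def)
  have ds: "distinct s" using dist by (simp add: s_def)
  have "inj_on (nth s) {..<n}"
    using ds len by (auto simp: inj_on_def nth_eq_iff_index_eq)
  moreover have "inv_gap a = (\<Sum>i<n. \<Sum>j<n. if i < j \<and> s ! i < s ! j then s ! j - s ! i else 0)"
    unfolding inv_gap_def s_def n_def ..
  ultimately have sorted_sum: "(\<Sum>k<n. (2 * int k + 1) * rev (sort s) ! k)
      = (\<Sum>k<n. (2 * int k + 1) * s ! k) - 2 * inv_gap a"
    using weighted_sum_rev_sort[OF ds] sum_rank_weighted len by simp
  have "wsize (psi a) = (\<Sum>k<n. (2 * int k + 1) * rev (sort s) ! k) + (\<Sum>k<n. (2 * int k + 1) * int (k + 1))"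
    by (simp add: wsize_def psi_nth n_def s_def ring_distribs sum.distrib)
  moreover have "wsize a = (\<Sum>k<n. (2 * int k + 1) * s ! k + (2 * int k + 1) * int (k + 1))"
    unfolding wsize_def n_def by (intro sum.cong refl) (simp add: s_def shiftI_nth algebra_simps)
  ultimately show ?thesis using sorted_sum by (simp add: sum.distrib)
qed

section \<open>Littlewood-Richardson fillings\<close>

definition cells_between :: "(nat \<Rightarrow> int) \<Rightarrow> (nat \<Rightarrow> int) \<Rightarrow> nat \<Rightarrow> (nat \<times> int) set" where
  "cells_between f g k = {(i, j). 1 \<le> i \<and> i \<le> k \<and> g (i - 1) < j \<and> j \<le> f (i - 1)}"

lemma cells_between_0 [simp]: "cells_between f g 0 = {}"
  by (auto simp: cells_between_def)

lemma cells_between_Suc: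
  "cells_between f g (Suc k) = cells_between f g k \<union> {Suc k} \<times> {g k<..f k}"
  by (auto simp: cells_between_def le_Suc_eq)

lemma finite_cells_between [simp]: "finite (cells_between f g k)"
  by (induction k) (simp_all add: cells_between_Suc)

lemma card_cells_between:
  "int (card (cells_between f g k)) = (\<Sum>i<k. max 0 (f i - g i))"
proof (induction k)
  case (Suc k)
  have "cells_between f g k \<inter> {Suc k} \<times> {g k<..f k} = {}"
    by (auto simp: cells_between_def)
  then show ?case
    using Suc.IH by (simp add: cells_between_Suc card_Un_disjoint card_cartesian_product)
qed simp

lemma skew_diagram_eq_cells_between:
  assumes "length w = r" "length x = r"
  shows "skew_diagram w x = cells_between (nth w) (nth x) r"
  using assms by (auto simp: skew_diagram_def diagram_def cells_between_def)

lemma young_eq_cells_between: "young v = cells_between (nth v) (\<lambda>_. 0) (length v)"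
  by (auto simp: young_def cells_between_def)

lemma young_first_column:
  assumes "is_partition lam" "(L, m) \<in> young lam" "1 \<le> l" "l \<le> L"
  shows "(l, 1) \<in> young lam"
proof -
  have L: "1 \<le> L" "L \<le> length lam" "1 \<le> m" "m \<le> lam ! (L - 1)"
    using assms(2) by (auto simp: young_def)
  have "lam ! (L - 1) \<le> lam ! (l - 1)"
    using assms(1,3,4) L sorted_wrt_nth_less[of "(\<ge>)" lam "l - 1" "L - 1"]
    by (cases "l = L") (auto simp: is_partition_def)
  then show ?thesis using L assms(3,4) by (auto simp: young_def)
qed

lemma LR_rules_first_column:
  assumes "LR_rules c D Y" "z \<in> D" "1 \<le> l" "l \<le> fst (c z)"
  shows "\<exists>y\<in>D. lr_le y z \<and> c y = (l, 1)"
proof -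
  obtain lam where lam: "is_partition lam" "c ` {y \<in> D. lr_le y z} = young lam"
    using assms(1,2) unfolding LR_rules_def is_young_diagram_def by blast
  have "c z \<in> young lam" using lam(2) assms(2) by (auto simp: lr_le_def)
  then have "(l, 1) \<in> young lam"
    using young_first_column[OF lam(1), of "fst (c z)" "snd (c z)"] assms(3,4) by simp
  then show ?thesis using lam(2) by (metis (mono_tags, lifting) imageE mem_Collect_eq)
qed

text \<open>The cell labelled \<open>(l + 1, 1)\<close> is preceded in LR order by the cell labelled \<open>(l, 1)\<close>,
  which cannot lie in the same row: there it would sit further right, hence carry a label
  with row index at least \<open>l + 1\<close>.\<close>

lemma LR_rules_row_le:
  assumes R: "LR_rules c D Y" and rows: "\<forall>z\<in>D. 1 \<le> fst z" and z: "z \<in> D"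
  shows "fst (c z) \<le> fst z"
proof -
  have row_mono: "\<And>x y. x \<in> D \<Longrightarrow> y \<in> D \<Longrightarrow> fst x = fst y \<Longrightarrow> snd x < snd y \<Longrightarrow> fst (c x) \<le> fst (c y)"
    using R unfolding LR_rules_def by blast
  have "\<forall>z\<in>D. l + 1 \<le> fst (c z) \<longrightarrow> l + 1 \<le> fst z" for l
  proof (induction l)
    case 0 then show ?case using rows by simp
  next
    case (Suc l)
    show ?case
    proof (intro ballI impI)
      fix z assume z: "z \<in> D" "Suc l + 1 \<le> fst (c z)"
      obtain z' where z': "z' \<in> D" "lr_le z' z" "c z' = (l + 2, 1)"
        using LR_rules_first_column[OF R z(1), of "l + 2"] z(2) by auto
      obtain y where y: "y \<in> D" "lr_le y z'" "c y = (l + 1, 1)"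
        using LR_rules_first_column[OF R z'(1), of "l + 1"] z'(3) by auto
      have "lr_less y z'" using y(2,3) z'(3) by (auto simp: lr_le_def)
      moreover have "\<not> (fst y = fst z' \<and> snd y > snd z')"
        using row_mono[OF z'(1) y(1)] y(3) z'(3) by auto
      ultimately have "fst y < fst z'" by (auto simp: lr_less_def)
      moreover have "fst z' \<le> fst z" using z'(2) by (auto simp: lr_le_def lr_less_def)
      moreover have "l + 1 \<le> fst y" using Suc.IH y(1,3) by simp
      ultimately show "Suc l + 1 \<le> fst z" by simp
    qed
  qed
  then show ?thesis using z by (cases "fst (c z)") auto
qed

lemma LR_nth_le:
  assumes "(w, b) \<in> LR r x v" "length x = r" "i < r"
  shows "x ! i \<le> w ! i"
proof -
  have "(i + 1, x ! i) \<in> diagram x" using assms(2,3) by (auto simp: diagram_def)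
  then have "(i + 1, x ! i) \<in> diagram w" using assms(1) by (auto simp: LR_def)
  then show ?thesis by (simp add: diagram_def)
qed

lemma LR_card_rows:
  assumes "(w, b) \<in> LR r x v" "length x = r" "k \<le> r"
  shows "int (card (cells_between (nth w) (nth x) k)) = (\<Sum>i<k. w ! i - x ! i)"
  using LR_nth_le[OF assms(1,2)] assms(3) by (auto simp: card_cells_between intro!: sum.cong)

lemma young_card_rows:
  assumes "is_partition v" "k \<le> length v"
  shows "int (card (cells_between (nth v) (\<lambda>_. 0) k)) = (\<Sum>i<k. v ! i)"
  using assms by (auto simp: card_cells_between is_partition_def intro!: sum.cong)

lemma LR_sum_eq:
  assumes LR: "(w, b) \<in> LR r x v" and "length x = r" "is_partition v" "length v = r"
  shows "(\<Sum>i<r. w ! i - x ! i) = (\<Sum>i<r. v ! i)"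
proof -
  have "length w = r" and "bij_betw b (young v) (skew_diagram w x)"
    using LR by (auto simp: LR_def gen_partition_def)
  then have "card (cells_between (nth v) (\<lambda>_. 0) r) = card (cells_between (nth w) (nth x) r)"
    using assms(2,4) by (simp add: bij_betw_same_card skew_diagram_eq_cells_between young_eq_cells_between)
  then show ?thesis
    using LR_card_rows[OF LR assms(2), of r] young_card_rows[OF assms(3), of r] assms(4) by simp
qed

lemma LR_partial_sums_le:
  assumes LR: "(w, b) \<in> LR r x v" and "length x = r" "is_partition v" "length v = r" "k \<le> r"
  shows "(\<Sum>i<k. w ! i - x ! i) \<le> (\<Sum>i<k. v ! i)"
proof -
  define c where "c = the_inv_into (young v) b"
  define D where "D = cells_between (nth w) (nth x) r"
  have "length w = r" using LR by (simp add: LR_def gen_partition_def)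
  then have R: "LR_rules c D (young v)"
    using LR assms(2) by (simp add: LR_def c_def D_def skew_diagram_eq_cells_between)
  have bij: "bij_betw c D (young v)" using R by (simp add: LR_rules_def)
  have rows_k: "cells_between (nth w) (nth x) k \<subseteq> D"
    using assms(5) by (auto simp: D_def cells_between_def)
  have "c ` cells_between (nth w) (nth x) k \<subseteq> cells_between (nth v) (\<lambda>_. 0) k"
  proof
    fix y assume "y \<in> c ` cells_between (nth w) (nth x) k"
    then obtain z where z: "z \<in> cells_between (nth w) (nth x) k" "y = c z" by blast
    have "z \<in> D" using z(1) rows_k by blast
    then have "y \<in> young v" "fst y \<le> fst z"
      using bij z(2) LR_rules_row_le[OF R] by (auto simp: bij_betw_def D_def cells_between_def)
    moreover have "fst z \<le> k" using z(1) by (auto simp: cells_between_def)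
    ultimately show "y \<in> cells_between (nth v) (\<lambda>_. 0) k"
      by (auto simp: young_eq_cells_between cells_between_def)
  qed
  moreover have "inj_on c (cells_between (nth w) (nth x) k)"
    using bij rows_k by (auto simp: bij_betw_def intro: inj_on_subset)
  ultimately have "card (cells_between (nth w) (nth x) k) \<le> card (cells_between (nth v) (\<lambda>_. 0) k)"
    by (intro card_inj_on_le) simp_all
  then show ?thesis
    using LR_card_rows[OF LR assms(2,5)] young_card_rows[OF assms(3), of k] assms(4,5) by linarith
qed

section \<open>An inequality for rows\<close>

definition row_bonus :: "int \<Rightarrow> int \<Rightarrow> int" where
  "row_bonus p e = (if 2 \<le> e \<and> 1 \<le> p then 1 else 0)"

lemma row_bonus_nonneg: "0 \<le> row_bonus p e"
  by (simp add: row_bonus_def)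

lemma sum_min_lower_bound:
  fixes e :: int and m :: nat
  assumes e: "1 \<le> e"
  shows "2 * max 0 (int m - e) * (e - 1) + row_bonus (int m) e
         \<le> (\<Sum>l<m. min (2 * e) (2 * int l + 3)) - 2 * int m"
proof (induction m)
  case 0
  then show ?case using e by (simp add: row_bonus_def)
next
  case (Suc m)
  show ?case
  proof (cases "int m + 1 \<le> e")
    case True
    then have "row_bonus (int (Suc m)) e \<le> row_bonus (int m) e + (min (2 * e) (2 * int m + 3) - 2)"
      using e by (auto simp: row_bonus_def)
    then show ?thesis using Suc.IH True by simp
  next
    case False
    then have "max 0 (int (Suc m) - e) = max 0 (int m - e) + 1"
      and "min (2 * e) (2 * int m + 3) = 2 * e"
      and "row_bonus (int (Suc m)) e = row_bonus (int m) e"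
      using e by (auto simp: row_bonus_def)
    then show ?thesis using Suc.IH by (simp add: algebra_simps)
  qed
qed

lemma row_saving_bound:
  fixes e p :: int and c :: "nat \<Rightarrow> int"
  assumes p: "0 \<le> p" and e: "1 \<le> e"
    and c: "\<And>j. j < nat p \<Longrightarrow> min (2 * e) (2 * (p - int j) + 1) \<le> c j"
  shows "2 * max 0 (p - e) * (e - 1) + row_bonus p e \<le> (\<Sum>j<nat p. c j) - 2 * p"
proof -
  obtain m where pm: "p = int m" using p nonneg_int_cases by blast
  have "(\<Sum>l<m. min (2 * e) (2 * int l + 3)) = (\<Sum>j<m. min (2 * e) (2 * (int m - int (m - Suc j)) + 1))"
    by (intro sum.cong refl) (auto simp: of_nat_diff)
  also have "\<dots> = (\<Sum>j<m. min (2 * e) (2 * (int m - int j) + 1))"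
    by (rule sum.nat_diff_reindex)
  also have "\<dots> \<le> (\<Sum>j<m. c j)"
    using c by (intro sum_mono) (simp add: pm)
  finally show ?thesis using sum_min_lower_bound[OF e, of m] by (simp add: pm)
qed

lemma row_bonus_step:
  fixes p e v C m g :: int
  assumes "0 \<le> p" "0 \<le> e" "1 \<le> v" "0 \<le> C" "0 \<le> m" "m \<le> max 0 (p - e)" "0 \<le> g" "0 \<le> g + v - e"
    and C_bound: "1 \<le> e \<Longrightarrow> 2 * max 0 (p - e) * (e - 1) + row_bonus p e \<le> C - 2 * p"
  shows "row_bonus p e \<le> C - 2 * p + 2 * max 0 (p - e) * (g + v - e) - 2 * m * g"
proof (cases "e = 0")
  case True
  then have max_eq: "max 0 (p - e) = p" and bonus: "row_bonus p e = 0"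
    using assms(1) by (simp_all add: row_bonus_def)
  have "2 * p * (g + 1) \<le> 2 * p * (g + v - e)" using assms True by (intro mult_left_mono) auto
  moreover have "2 * m * g \<le> 2 * p * g" using assms max_eq by (intro mult_right_mono) auto
  moreover have "2 * p * (g + 1) = 2 * p * g + 2 * p" by (simp add: algebra_simps)
  ultimately show ?thesis unfolding max_eq bonus using assms(4) by linarith
next
  case False
  define M where "M = max 0 (p - e)"
  have "2 * M * (g + 1 - e) \<le> 2 * M * (g + v - e)" using assms by (intro mult_left_mono) (auto simp: M_def)
  moreover have "2 * m * g \<le> 2 * M * g" using assms by (intro mult_right_mono) (auto simp: M_def)
  moreover have "2 * M * (g + 1 - e) = 2 * M * g - 2 * M * (e - 1)" by (simp add: algebra_simps)
  moreover have "2 * M * (e - 1) + row_bonus p e \<le> C - 2 * p" using C_bound False assms by (simp add: M_def)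
  ultimately show ?thesis unfolding M_def[symmetric] by linarith
qed

text \<open>The induction carries the slack \<open>2 * max 0 (p (k - 1) - e (k - 1)) * (\<Sum>i<k. v i - e i)\<close>:
  it is nonnegative by dominance, its growth is paid for by the rows' surplus, and it vanishes
  at \<open>k = r\<close>.\<close>

lemma sum_row_bonus_le:
  fixes p e v C :: "nat \<Rightarrow> int"
  assumes p: "\<And>i. i < r \<Longrightarrow> 0 \<le> p i" and e: "\<And>i. i < r \<Longrightarrow> 0 \<le> e i"
    and v: "\<And>i. i < r \<Longrightarrow> 1 \<le> v i" and C: "\<And>i. i < r \<Longrightarrow> 0 \<le> C i"
    and C_bound: "\<And>i. i < r \<Longrightarrow> 1 \<le> e i \<Longrightarrow>
                   2 * max 0 (p i - e i) * (e i - 1) + row_bonus (p i) (e i) \<le> C i - 2 * p i"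
    and mono: "\<And>i j. i \<le> j \<Longrightarrow> j < r \<Longrightarrow> p i - e i \<le> p j - e j"
    and dom: "\<And>k. k \<le> r \<Longrightarrow> (\<Sum>i<k. e i) \<le> (\<Sum>i<k. v i)"
    and total: "(\<Sum>i<r. e i) = (\<Sum>i<r. v i)"
  shows "(\<Sum>i<r. row_bonus (p i) (e i)) \<le> (\<Sum>i<r. C i - 2 * p i)"
proof -
  define gap where "gap k = (\<Sum>i<k. v i - e i)" for k
  define slack where "slack k = (if k = 0 then 0 else max 0 (p (k - 1) - e (k - 1)))" for k
  have bound: "(\<Sum>i<k. row_bonus (p i) (e i)) \<le> (\<Sum>i<k. C i - 2 * p i) + 2 * slack k * gap k"
    if "k \<le> r" for k
    using that
  proof (induction k)
    case (Suc k)
    have "0 \<le> slack k" "slack k \<le> max 0 (p k - e k)"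
      using mono[of "k - 1" k] Suc.prems by (auto simp: slack_def)
    moreover have "0 \<le> gap k" "0 \<le> gap k + v k - e k"
      using dom[of k] dom[of "Suc k"] Suc.prems by (simp_all add: gap_def sum_subtractf)
    ultimately have "row_bonus (p k) (e k)
        \<le> C k - 2 * p k + 2 * max 0 (p k - e k) * (gap k + v k - e k) - 2 * slack k * gap k"
      using Suc.prems by (intro row_bonus_step p e v C C_bound) auto
    moreover have "gap (Suc k) = gap k + v k - e k" "slack (Suc k) = max 0 (p k - e k)"
      by (simp_all add: gap_def slack_def)
    moreover have "(\<Sum>i<k. row_bonus (p i) (e i)) \<le> (\<Sum>i<k. C i - 2 * p i) + 2 * slack k * gap k"
      using Suc by simp
    ultimately show ?case by (simp only: sum.lessThan_Suc)
  qed (simp add: gap_def)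
  moreover have "gap r = 0" using total by (simp add: gap_def sum_subtractf)
  ultimately show ?thesis using bound[of r] by simp
qed

section \<open>Column lengths\<close>

lemma partition_nth_nonneg: "is_partition u \<Longrightarrow> k < length u \<Longrightarrow> 0 \<le> u ! k"
  by (simp add: is_partition_def)

lemma partition_nth_antimono:
  "is_partition u \<Longrightarrow> k \<le> l \<Longrightarrow> l < length u \<Longrightarrow> u ! l \<le> u ! k"
  by (cases "k = l") (auto simp: is_partition_def sorted_wrt_iff_nth_less)

text \<open>Columns are indexed from \<open>0\<close>: \<open>col_len u j\<close> is the length of column \<open>j + 1\<close> of \<open>u\<close>.\<close>

definition col_len :: "int list \<Rightarrow> nat \<Rightarrow> int" where
  "col_len u j = int (card {k. k < length u \<and> int j < u ! k})"

lemma length_conj_part [simp]: "length (conj_part n u) = n"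
  by (simp add: conj_part_def)

lemma conj_part_nth: "j < n \<Longrightarrow> conj_part n u ! j = col_len u j"
  by (simp add: conj_part_def col_len_def add.commute[of 1] add1_zle_eq
           del: upt_Suc)

lemma col_len_sum: "col_len u j = (\<Sum>k<length u. if int j < u ! k then 1 else 0)"
  unfolding col_len_def by (rule int_card_filter_lessThan)

lemma col_len_antimono: "j \<le> j' \<Longrightarrow> col_len u j' \<le> col_len u j"
  unfolding col_len_def by (auto intro!: card_mono)

lemma col_len_le:
  assumes "is_partition u" "i < length u" "rev u ! i \<le> int j"
  shows "col_len u j \<le> int (length u - 1 - i)"
proof -
  have "{k. k < length u \<and> int j < u ! k} \<subseteq> {..<length u - 1 - i}"
  proof
    fix k assume k: "k \<in> {k. k < length u \<and> int j < u ! k}"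
    have "\<not> length u - 1 - i \<le> k"
      using k assms partition_nth_antimono[OF assms(1), of "length u - 1 - i" k] by (auto simp: rev_nth)
    then show "k \<in> {..<length u - 1 - i}" by simp
  qed
  then have "card {k. k < length u \<and> int j < u ! k} \<le> card {..<length u - 1 - i}"
    by (intro card_mono) auto
  then show ?thesis by (simp add: col_len_def)
qed

lemma col_len_ge:
  assumes "is_partition u" "i < length u" "int j < rev u ! i"
  shows "int (length u - i) \<le> col_len u j"
proof -
  have "{..length u - 1 - i} \<subseteq> {k. k < length u \<and> int j < u ! k}"
  proof
    fix k assume "k \<in> {..length u - 1 - i}"
    then have "k < length u" "u ! (length u - 1 - i) \<le> u ! k"
      using assms(2) partition_nth_antimono[OF assms(1)] by auto
    moreover have "u ! (length u - 1 - i) = rev u ! i" using assms(2) by (simp add: rev_nth)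
    ultimately show "k \<in> {k. k < length u \<and> int j < u ! k}" using assms(3) by auto
  qed
  then have "card {..length u - 1 - i} \<le> card {k. k < length u \<and> int j < u ! k}"
    by (intro card_mono) auto
  then show ?thesis using assms(2) by (simp add: col_len_def)
qed

lemma col_len_first_nonzero:
  assumes "is_partition u" "i < length u" "1 \<le> rev u ! i" "\<forall>i'<i. rev u ! i' = 0"
  shows "col_len u (nat (rev u ! i) - 1) = int (length u - i)"
proof -
  have "{k. k < length u \<and> int (nat (rev u ! i) - 1) < u ! k} \<subseteq> {..length u - 1 - i}"
  proof
    fix k assume k: "k \<in> {k. k < length u \<and> int (nat (rev u ! i) - 1) < u ! k}"
    have "rev u ! (length u - 1 - k) = u ! k" using k by (auto simp: rev_nth Suc_diff_Suc)
    then have "\<not> length u - 1 - k < i" using k assms(3,4) by auto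
    then show "k \<in> {..length u - 1 - i}" using k by auto
  qed
  then have "card {k. k < length u \<and> int (nat (rev u ! i) - 1) < u ! k} \<le> card {..length u - 1 - i}"
    by (intro card_mono) auto
  then have "col_len u (nat (rev u ! i) - 1) \<le> int (length u - i)"
    using assms(2) by (simp add: col_len_def)
  moreover have "int (length u - i) \<le> col_len u (nat (rev u ! i) - 1)"
    using assms by (intro col_len_ge) auto
  ultimately show ?thesis by simp
qed

lemma sum_col_len:
  assumes "is_partition u" "\<forall>x\<in>set u. x \<le> int n"
  shows "(\<Sum>j<n. col_len u j) = psize u"
proof -
  have "(\<Sum>j<n. col_len u j) = (\<Sum>k<length u. \<Sum>j<n. if int j < u ! k then 1 else 0)"
    unfolding col_len_sum by (rule sum.swap)
  also have "\<dots> = (\<Sum>k<length u. u ! k)"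
    using assms sum_indicator_less partition_nth_nonneg by (intro sum.cong refl) (simp add: min_absorb2)
  finally show ?thesis by (simp add: psize_def sum_list_sum_nth atLeast0LessThan)
qed

lemma sum_weighted_col_len:
  assumes "is_partition u" "\<forall>x\<in>set u. x \<le> int n"
  shows "(\<Sum>j<n. 2 * int j * col_len u j) = (\<Sum>k<length u. u ! k * (u ! k - 1))"
proof -
  have "(\<Sum>j<n. 2 * int j * col_len u j) = (\<Sum>j<n. \<Sum>k<length u. if int j < u ! k then 2 * int j else 0)"
    unfolding col_len_sum by (simp add: sum_distrib_left if_distrib cong: if_cong)
  also have "\<dots> = (\<Sum>k<length u. \<Sum>j<n. if int j < u ! k then 2 * int j else 0)"
    by (rule sum.swap)
  also have "\<dots> = (\<Sum>k<length u. u ! k * (u ! k - 1))"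
    using assms partition_nth_nonneg by (intro sum.cong refl sum_double_less) auto
  finally show ?thesis .
qed

lemma sum_sum_col_len:
  assumes "is_partition u"
  shows "(\<Sum>i<length u. \<Sum>j<nat (rev u ! i). col_len u j) = wsize u"
proof -
  let ?r = "length u"
  have "(\<Sum>j<nat z. col_len u j) = (\<Sum>k<?r. min z (u ! k))" if "0 \<le> z" for z
  proof -
    have "(\<Sum>j<nat z. col_len u j) = (\<Sum>k<?r. \<Sum>j<nat z. if int j < u ! k then 1 else 0)"
      unfolding col_len_sum by (rule sum.swap)
    then show ?thesis
      using assms that sum_indicator_less partition_nth_nonneg by (simp add: min_def)
  qed
  moreover have "0 \<le> rev u ! i" if "i < ?r" for i
    using that partition_nth_nonneg[OF assms] by (simp add: rev_nth)
  ultimately have "(\<Sum>i<?r. \<Sum>j<nat (rev u ! i). col_len u j) = (\<Sum>i<?r. \<Sum>k<?r. min (rev u ! i) (u ! k))"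
    by simp
  also have "\<dots> = (\<Sum>i<?r. \<Sum>k<?r. min (u ! i) (u ! k))"
    using sum_rev_nth[of u ?r "\<lambda>_ x. \<Sum>k<?r. min x (u ! k)"] by simp
  also have "\<dots> = (\<Sum>i<?r. \<Sum>k<?r. u ! max i k)"
  proof (intro sum.cong refl)
    fix i k assume "i \<in> {..<?r}" "k \<in> {..<?r}"
    then show "min (u ! i) (u ! k) = u ! max i k"
      using partition_nth_antimono[OF assms, of i k] partition_nth_antimono[OF assms, of k i]
      by (cases "i \<le> k") (auto simp: min_def max_def)
  qed
  also have "\<dots> = wsize u" by (simp add: sum_sum_max wsize_def)
  finally show ?thesis .
qed

section \<open>The excess of an admissible pair\<close>

locale admissible_LR_pair =
  fixes d r :: nat and u v w :: "int list" and b :: "nat \<times> int \<Rightarrow> nat \<times> int"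
  assumes r_pos: "1 \<le> r" and r_less_d: "r < d"
    and u_partition: "is_partition u" and length_u: "length u = r" and u_first: "u ! 0 \<le> int (d - r)"
    and v_partition: "is_partition v" and length_v: "length v = r" and plen_v: "plen v = r"
    and LR_pair: "(w, b) \<in> LR r (chi u) v"
    and admissible: "admissible (w @ conj_part (d - r) u)"
begin

abbreviation a :: "int list" where "a \<equiv> w @ conj_part (d - r) u"

abbreviation s :: "nat \<Rightarrow> int" where "s k \<equiv> shiftI a ! k"

lemma length_chi: "length (chi u) = r"
  by (simp add: chi_def length_u)

lemma chi_nth: "i < r \<Longrightarrow> chi u ! i = - rev u ! i"
  by (simp add: chi_def rev_map length_u)

lemma rev_u_nonneg: "i < r \<Longrightarrow> 0 \<le> rev u ! i"
  using partition_nth_nonneg[OF u_partition] length_u by (simp add: rev_nth)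

lemma u_bounded: "\<forall>x\<in>set u. x \<le> int (d - r)"
proof
  fix x assume "x \<in> set u"
  then obtain k where "k < length u" "x = u ! k" by (auto simp: in_set_conv_nth)
  then show "x \<le> int (d - r)" using partition_nth_antimono[OF u_partition, of 0 k] u_first by simp
qed

lemma rev_u_bounded: "i < r \<Longrightarrow> rev u ! i \<le> int (d - r)"
  using u_bounded length_u by (simp add: rev_nth)

lemma length_w: "length w = r"
  using LR_pair by (simp add: LR_def gen_partition_def)

lemma w_antimono: "i \<le> j \<Longrightarrow> j < r \<Longrightarrow> w ! j \<le> w ! i"
  using LR_pair length_w
  by (cases "i = j") (auto simp: LR_def gen_partition_def sorted_wrt_iff_nth_less)

lemma length_a: "length a = d"
  using length_w r_less_d by simp

lemma s_w: "i < r \<Longrightarrow> s i = w ! i - int (i + 1)"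
  using length_w length_a r_less_d by (simp add: shiftI_nth nth_append)

lemma s_conj: "j < d - r \<Longrightarrow> s (r + j) = col_len u j - int (r + j + 1)"
  using length_w length_a by (simp add: shiftI_nth nth_append conj_part_nth)

lemma distinct_s: "distinct (shiftI a)"
  using admissible by (simp add: admissible_def)

lemma v_pos: "i < r \<Longrightarrow> 1 \<le> v ! i"
proof -
  assume i: "i < r"
  have "{k. k < length v \<and> v ! k \<noteq> 0} = {..<r}"
    using plen_v length_v by (intro card_subset_eq) (auto simp: plen_def)
  then have "v ! i \<noteq> 0" using i by auto
  then show ?thesis using partition_nth_nonneg[OF v_partition] i length_v by fastforce
qed

text \<open>\<open>row_len i\<close> is the length of row \<open>i + 1\<close> of the skew diagram \<open>w / \<chi>(u)\<close>.\<close>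

definition row_len :: "nat \<Rightarrow> int" where
  "row_len i = w ! i + rev u ! i"

lemma row_len_nonneg: "i < r \<Longrightarrow> 0 \<le> row_len i"
  using LR_nth_le[OF LR_pair length_chi, of i] chi_nth[of i] by (simp add: row_len_def)

lemma sum_row_len: "k \<le> r \<Longrightarrow> (\<Sum>i<k. row_len i) = (\<Sum>i<k. w ! i - chi u ! i)"
  by (intro sum.cong refl) (simp add: row_len_def chi_nth)

lemma row_len_partial_sums_le: "k \<le> r \<Longrightarrow> (\<Sum>i<k. row_len i) \<le> (\<Sum>i<k. v ! i)"
  using LR_partial_sums_le[OF LR_pair length_chi v_partition length_v, of k] sum_row_len[of k]
  by simp

lemma row_len_sum_eq: "(\<Sum>i<r. row_len i) = (\<Sum>i<r. v ! i)"
  using LR_sum_eq[OF LR_pair length_chi v_partition length_v] sum_row_len[of r] by simp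

definition dom_weight :: int where
  "dom_weight = (\<Sum>i<r. int i * (row_len i - v ! i))"

lemma dom_weight_eq_sum_partial_sums:
  "dom_weight = (\<Sum>k<r. \<Sum>i<Suc k. v ! i - row_len i)"
proof -
  have "(\<Sum>k<r. \<Sum>i<Suc k. v ! i - row_len i) = (\<Sum>i<r. int (r - i) * (v ! i - row_len i))"
    by (rule sum_partial_sums)
  also have "\<dots> = (\<Sum>i<r. int r * (v ! i - row_len i) + int i * (row_len i - v ! i))"
    by (intro sum.cong refl) (simp add: of_nat_diff algebra_simps)
  also have "\<dots> = int r * (\<Sum>i<r. v ! i - row_len i) + dom_weight"
    by (simp add: dom_weight_def sum.distrib sum_distrib_left)
  finally show ?thesis using row_len_sum_eq by (simp add: sum_subtractf)
qed

lemma partial_sum_nonneg: "k \<le> r \<Longrightarrow> 0 \<le> (\<Sum>i<k. v ! i - row_len i)"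
  using row_len_partial_sums_le by (simp add: sum_subtractf)

lemma partial_sum_le_dom_weight:
  "k < r \<Longrightarrow> (\<Sum>i<Suc k. v ! i - row_len i) \<le> dom_weight"
  unfolding dom_weight_eq_sum_partial_sums by (intro member_le_sum partial_sum_nonneg) auto

lemma dom_weight_nonneg: "0 \<le> dom_weight"
  unfolding dom_weight_eq_sum_partial_sums by (intro sum_nonneg partial_sum_nonneg) auto

lemma row_len_eq_of_dom_weight_zero:
  assumes "dom_weight = 0" "i < r"
  shows "row_len i = v ! i"
proof -
  have zero: "(\<Sum>l<Suc k. v ! l - row_len l) = 0" if "k < r" for k
    using partial_sum_le_dom_weight[of k] partial_sum_nonneg[of "Suc k"] that assms(1) by simp
  have "(\<Sum>l<i. v ! l - row_len l) = 0"
    using zero[of "i - 1"] assms(2) by (cases i) auto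
  then show ?thesis using zero[of i] assms(2) by simp
qed

lemma sum_inversions_cross:
  fixes f :: "nat \<Rightarrow> nat \<Rightarrow> int"
  shows "(\<Sum>i<d. \<Sum>j<d. if i < j \<and> s i < s j then f i j else 0)
   = (\<Sum>i<r. \<Sum>j<d - r. if s i < s (r + j) then f i (r + j) else 0)"
proof -
  have "r + (d - r) = d" using r_less_d by simp
  moreover have "s j \<le> s i" if "i < j" "j < r" for i j
    using that w_antimono[of i j] by (simp add: s_w)
  moreover have "s j \<le> s i" if "r \<le> i" "i < j" "j < r + (d - r)" for i j
  proof -
    have "col_len u (j - r) \<le> col_len u (i - r)" using that by (intro col_len_antimono) simp
    moreover have "s i = col_len u (i - r) - int (i + 1)" "s j = col_len u (j - r) - int (j + 1)"
      using that s_conj[of "i - r"] s_conj[of "j - r"] by simp_all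
    ultimately show ?thesis using that(2) by simp
  qed
  ultimately show ?thesis using sum_increasing_pairs_two_blocks[of r s "d - r" f] by metis
qed

text \<open>\<open>base i\<close> is the value \<open>s i\<close> would take if row \<open>i + 1\<close> of the skew diagram were empty;
  \<open>base_cost i\<close> is \<open>inv_cost i\<close> for such an empty row, and \<open>saving i\<close> is what the actual row
  saves on it.\<close>

definition base :: "nat \<Rightarrow> int" where
  "base i = - rev u ! i - int (i + 1)"

definition inv_cost :: "nat \<Rightarrow> int" where
  "inv_cost i = (\<Sum>j<d - r. if s i < s (r + j) then 2 * (s (r + j) - s i) + 1 else 0)"

definition base_cost :: "nat \<Rightarrow> int" where
  "base_cost i = (\<Sum>j<nat (rev u ! i). 2 * (s (r + j) - base i) + 1)"

definition saving :: "nat \<Rightarrow> int" where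
  "saving i = (\<Sum>j<nat (rev u ! i).
     if s i < s (r + j) then 2 * row_len i else 2 * (s (r + j) - base i) + 1)"

definition excess :: int where
  "excess = (\<Sum>i<r. saving i - 2 * rev u ! i) + 2 * dom_weight"

lemma s_eq_base: "i < r \<Longrightarrow> s i = base i + row_len i"
  by (simp add: s_w base_def row_len_def)

lemma no_inversion_beyond:
  assumes "i < r" "j < d - r" "rev u ! i \<le> int j"
  shows "\<not> s i < s (r + j)"
proof -
  have "col_len u j \<le> int (r - 1 - i)"
    using col_len_le[OF u_partition] assms length_u by simp
  then have "s (r + j) < base i" using assms by (simp add: s_conj base_def of_nat_diff)
  then show ?thesis using s_eq_base row_len_nonneg assms(1) by fastforce
qed

lemma base_gap:
  assumes "i < r" "j < nat (rev u ! i)"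
  shows "rev u ! i - int j \<le> s (r + j) - base i"
proof -
  have "int (r - i) \<le> col_len u j"
    using col_len_ge[OF u_partition] assms length_u by simp
  moreover have "j < d - r" using assms rev_u_bounded[of i] by linarith
  ultimately show ?thesis using assms by (simp add: s_conj base_def of_nat_diff)
qed

lemma sum_inv_cost: "(\<Sum>i<r. inv_cost i) = 2 * inv_gap a + int (inv_count a)"
proof -
  have gap: "inv_gap a = (\<Sum>i<r. \<Sum>j<d - r. if s i < s (r + j) then s (r + j) - s i else 0)"
    unfolding inv_gap_def length_a by (rule sum_inversions_cross)
  have count: "int (inv_count a) = (\<Sum>i<r. \<Sum>j<d - r. if s i < s (r + j) then 1 else 0)"
    unfolding int_inv_count length_a by (rule sum_inversions_cross)
  show ?thesis
    unfolding gap count inv_cost_def sum_distrib_left sum.distrib[symmetric]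
    by (intro sum.cong refl) auto
qed

lemma inv_cost_eq:
  assumes i: "i < r"
  shows "inv_cost i = base_cost i - saving i"
proof -
  let ?f = "\<lambda>j. if s i < s (r + j) then 2 * (s (r + j) - s i) + 1 else 0"
  define m where "m = nat (rev u ! i)"
  have "m + (d - r - m) = d - r" using rev_u_bounded[OF i] by (simp add: m_def)
  then have "inv_cost i = (\<Sum>j<m. ?f j) + (\<Sum>j<d - r - m. ?f (m + j))"
    unfolding inv_cost_def using sum_lessThan_add[of ?f m "d - r - m"] by simp
  also have "(\<Sum>j<d - r - m. ?f (m + j)) = 0"
  proof (intro sum.neutral ballI)
    fix j assume "j \<in> {..<d - r - m}"
    then have "\<not> s i < s (r + (m + j))"
      using no_inversion_beyond[OF i, of "m + j"] rev_u_nonneg[OF i] by (simp add: m_def)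
    then show "?f (m + j) = 0" by simp
  qed
  also have "(\<Sum>j<m. ?f j) = (\<Sum>j<m. (2 * (s (r + j) - base i) + 1)
      - (if s i < s (r + j) then 2 * row_len i else 2 * (s (r + j) - base i) + 1))"
    by (intro sum.cong refl) (simp add: s_eq_base[OF i])
  finally show ?thesis by (simp add: base_cost_def saving_def m_def sum_subtractf)
qed

lemma saving_nonneg: "i < r \<Longrightarrow> 0 \<le> saving i"
  unfolding saving_def using base_gap row_len_nonneg by (intro sum_nonneg) fastforce

lemma saving_bound:
  assumes "i < r" "1 \<le> row_len i"
  shows "2 * max 0 (rev u ! i - row_len i) * (row_len i - 1) + row_bonus (rev u ! i) (row_len i)
         \<le> saving i - 2 * rev u ! i"
  unfolding saving_def
proof (rule row_saving_bound)
  fix j assume "j < nat (rev u ! i)"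
  from base_gap[OF assms(1) this]
  have "2 * (rev u ! i - int j) + 1 \<le> 2 * (s (r + j) - base i) + 1" by simp
  then show "min (2 * row_len i) (2 * (rev u ! i - int j) + 1)
      \<le> (if s i < s (r + j) then 2 * row_len i else 2 * (s (r + j) - base i) + 1)"
    by (simp add: min.coboundedI2)
qed (use assms rev_u_nonneg in auto)

lemma sum_row_bonus_le_excess:
  "(\<Sum>i<r. row_bonus (rev u ! i) (row_len i)) + 2 * dom_weight \<le> excess"
proof -
  have "(\<Sum>i<r. row_bonus (rev u ! i) (row_len i)) \<le> (\<Sum>i<r. saving i - 2 * rev u ! i)"
  proof (rule sum_row_bonus_le)
    show "rev u ! i - row_len i \<le> rev u ! j - row_len j" if "i \<le> j" "j < r" for i j
      using w_antimono[OF that] by (simp add: row_len_def)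
  qed (use rev_u_nonneg row_len_nonneg v_pos saving_nonneg saving_bound
         row_len_partial_sums_le row_len_sum_eq in auto)
  then show ?thesis by (simp add: excess_def)
qed

lemma psize_eq: "psize u = (\<Sum>i<r. rev u ! i)"
  using sum_rev_nth[OF length_u, of "\<lambda>_ x. x"] length_u
  by (simp add: psize_def sum_list_sum_nth atLeast0LessThan)

lemma base_cost_eq:
  assumes i: "i < r"
  shows "base_cost i = 2 * (\<Sum>j<nat (rev u ! i). col_len u j)
                       + rev u ! i * rev u ! i + 2 * (int i - int r + 1) * rev u ! i"
proof -
  let ?p = "rev u ! i"
  have "base_cost i = (\<Sum>j<nat ?p. 2 * col_len u j + (2 * ?p + 2 * int i - 2 * int r + 1) - 2 * int j)"
    unfolding base_cost_def
  proof (intro sum.cong refl)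
    fix j assume "j \<in> {..<nat ?p}"
    then have "j < d - r" using rev_u_bounded[OF i] by simp
    then show "2 * (s (r + j) - base i) + 1 = 2 * col_len u j + (2 * ?p + 2 * int i - 2 * int r + 1) - 2 * int j"
      using s_conj[of j] by (simp add: base_def algebra_simps)
  qed
  also have "\<dots> = 2 * (\<Sum>j<nat ?p. col_len u j) + ?p * (2 * ?p + 2 * int i - 2 * int r + 1) - ?p * (?p - 1)"
    using sum_double_lessThan[of "nat ?p"] rev_u_nonneg[OF i]
    by (simp add: sum_subtractf sum.distrib sum_distrib_left)
  finally show ?thesis by (simp add: algebra_simps)
qed

lemma sum_base_cost:
  "(\<Sum>i<r. base_cost i)
   = (\<Sum>j<d - r. (2 * int (r + j) + 1) * col_len u j) - (\<Sum>i<r. 2 * int i * rev u ! i)"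
proof -
  let ?p = "\<lambda>i. rev u ! i"
  have "(\<Sum>j<d - r. (2 * int (r + j) + 1) * col_len u j)
      = (2 * int r + 1) * (\<Sum>j<d - r. col_len u j) + (\<Sum>j<d - r. 2 * int j * col_len u j)"
    by (simp add: algebra_simps sum.distrib sum_distrib_left)
  also have "\<dots> = (2 * int r + 1) * (\<Sum>i<r. ?p i) + (\<Sum>i<r. ?p i * (?p i - 1))"
    using sum_col_len[OF u_partition u_bounded] sum_weighted_col_len[OF u_partition u_bounded]
      sum_rev_nth[OF length_u, of "\<lambda>_ x. x * (x - 1)"]
    by (simp add: psize_eq length_u)
  also have "\<dots> = (\<Sum>i<r. ?p i * ?p i + 2 * int r * ?p i)"
    by (simp add: sum_distrib_left sum.distrib[symmetric] algebra_simps)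
  finally have conj_side: "(\<Sum>j<d - r. (2 * int (r + j) + 1) * col_len u j) = \<dots>" .
  have "(\<Sum>i<r. base_cost i)
      = 2 * wsize u + (\<Sum>i<r. ?p i * ?p i + 2 * (int i - int r + 1) * ?p i)"
    using sum_sum_col_len[OF u_partition] length_u
    by (simp add: base_cost_eq sum.distrib flip: sum_distrib_left)
  also have "wsize u = (\<Sum>i<r. (2 * int (r - 1 - i) + 1) * ?p i)"
    using wsize_rev[OF length_u] by simp
  also have "2 * \<dots> + (\<Sum>i<r. ?p i * ?p i + 2 * (int i - int r + 1) * ?p i)
      = (\<Sum>i<r. ?p i * ?p i + 2 * int r * ?p i - 2 * int i * ?p i)"
    by (simp add: sum_distrib_left sum.distrib[symmetric] of_nat_diff algebra_simps)
  finally show ?thesis unfolding conj_side by (simp add: sum_subtractf)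
qed

lemma sum_weighted_w:
  "(\<Sum>i<r. (2 * int i + 1) * w ! i) = wsize v + 2 * dom_weight - (\<Sum>i<r. (2 * int i + 1) * rev u ! i)"
proof -
  have "(\<Sum>i<r. (2 * int i + 1) * w ! i) = (\<Sum>i<r. (2 * int i + 1) * v ! i + 2 * (int i * (row_len i - v ! i))
      + (row_len i - v ! i) - (2 * int i + 1) * rev u ! i)"
    by (intro sum.cong refl) (simp add: row_len_def algebra_simps)
  also have "\<dots> = wsize v + 2 * dom_weight + ((\<Sum>i<r. row_len i) - (\<Sum>i<r. v ! i))
      - (\<Sum>i<r. (2 * int i + 1) * rev u ! i)"
    by (simp add: wsize_def length_v dom_weight_def sum.distrib sum_subtractf sum_distrib_left)
  finally show ?thesis using row_len_sum_eq by simp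
qed

lemma excess_eq: "wsize a - wsize v - psize u - (\<Sum>i<r. inv_cost i) = excess"
proof -
  have "wsize a = (\<Sum>i<r. (2 * int i + 1) * w ! i) + (\<Sum>j<d - r. (2 * int (r + j) + 1) * col_len u j)"
    unfolding wsize_append by (simp add: wsize_def length_w conj_part_nth)
  moreover have "(\<Sum>i<r. inv_cost i) = (\<Sum>i<r. base_cost i) - (\<Sum>i<r. saving i)"
    using inv_cost_eq by (simp add: sum_subtractf)
  moreover have "(\<Sum>i<r. (2 * int i + 1) * rev u ! i) = (\<Sum>i<r. 2 * int i * rev u ! i) + psize u"
    by (simp add: psize_eq sum.distrib algebra_simps)
  moreover have "excess = (\<Sum>i<r. saving i) - 2 * psize u + 2 * dom_weight"
    by (simp add: excess_def psize_eq sum_subtractf sum_distrib_left)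
  ultimately show ?thesis using sum_weighted_w sum_base_cost by simp
qed

lemma norm2_psi_bound_of_excess:
  assumes "1 \<le> excess"
  shows "psize u + int (inv_count a) + 1 + norm2 v \<le> norm2 (psi a)"
proof -
  have "norm2 v \<le> wsize v"
    using v_partition by (intro norm2_le_wsize) (simp add: is_partition_def)
  moreover have "wsize (psi a) \<le> norm2 (psi a)"
    using sorted_psi[OF distinct_s] by (rule wsize_le_norm2)
  moreover have "wsize (psi a) = wsize a - 2 * inv_gap a"
    using distinct_s by (rule wsize_psi)
  ultimately show ?thesis using assms excess_eq sum_inv_cost by linarith
qed

lemma rev_u_of_u_zero: "\<forall>x\<in>set u. x = 0 \<Longrightarrow> i < r \<Longrightarrow> rev u ! i = 0"
  using length_u by (simp add: rev_nth)

lemma excess_of_u_zero: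
  assumes "\<forall>x\<in>set u. x = 0"
  shows "excess = 2 * dom_weight"
proof -
  have "rev u ! i = 0" if "i < r" for i
    using rev_u_of_u_zero[OF assms that] .
  then have "(\<Sum>i<r. saving i - 2 * rev u ! i) = 0"
    by (intro sum.neutral) (simp add: saving_def)
  then show ?thesis by (simp add: excess_def)
qed

lemma psi_of_u_zero:
  assumes u0: "\<forall>x\<in>set u. x = 0" and D0: "dom_weight = 0"
  shows "psi a = v @ replicate (d - r) 0"
proof -
  have "w ! i = v ! i" if "i < r" for i
    using row_len_eq_of_dom_weight_zero[OF D0 that] rev_u_of_u_zero[OF u0 that] by (simp add: row_len_def)
  then have "w = v" using length_w length_v by (intro nth_equalityI) auto
  moreover have "conj_part (d - r) u = replicate (d - r) 0"
  proof -
    have "u ! k = 0" if "k < r" for k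
      using u0 that length_u by simp
    then show ?thesis using length_u by (intro nth_equalityI) (auto simp: conj_part_nth col_len_def)
  qed
  ultimately have a_eq: "a = v @ replicate (d - r) 0" by simp
  have "sorted_wrt (\<ge>) (replicate (d - r) (0::int))"
    by (simp add: sorted_wrt_iff_nth_less)
  then have "sorted_wrt (\<ge>) a"
    using v_partition unfolding a_eq by (auto simp: is_partition_def sorted_wrt_append)
  then have "psi a = a" by (rule psi_eq_self)
  then show ?thesis using a_eq by simp
qed

text \<open>A row of length one would make \<open>s i\<close> coincide with \<open>s (r + rev u ! i - 1)\<close>,
  contradicting admissibility.\<close>

lemma row_len_ne_1_at_first_nonzero:
  assumes i: "i < r" and p: "1 \<le> rev u ! i" and below: "\<forall>i'<i. rev u ! i' = 0"
  shows "row_len i \<noteq> 1"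
proof
  assume e1: "row_len i = 1"
  define J where "J = nat (rev u ! i) - 1"
  have J: "int J = rev u ! i - 1" "J < d - r"
    using p rev_u_bounded[OF i] by (auto simp: J_def of_nat_diff)
  have "col_len u J = int (r - i)"
    using col_len_first_nonzero[OF u_partition, of i] i p below length_u by (simp add: J_def)
  then have "s i = s (r + J)"
    using e1 J i by (simp add: s_eq_base base_def s_conj of_nat_diff)
  moreover have "i \<noteq> r + J" "i < length (shiftI a)" "r + J < length (shiftI a)"
    using i J length_a by auto
  ultimately show False using distinct_s by (simp add: nth_eq_iff_index_eq)
qed

lemma first_positive_rev_u:
  assumes "\<exists>x\<in>set u. x \<noteq> 0"
  obtains i where "i < r" "1 \<le> rev u ! i" "\<forall>i'<i. rev u ! i' = 0"
proof -
  obtain k where k: "k < r" "u ! k \<noteq> 0" using assms length_u by (auto simp: in_set_conv_nth)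
  then have last: "1 \<le> rev u ! (r - 1)"
    using partition_nth_antimono[OF u_partition, of 0 k] partition_nth_nonneg[OF u_partition, of k]
      length_u r_pos by (simp add: rev_nth)
  define i where "i = (LEAST i. 1 \<le> rev u ! i)"
  have "i \<le> r - 1" unfolding i_def by (rule Least_le) (rule last)
  then have "i < r" using r_pos by simp
  moreover have "1 \<le> rev u ! i" unfolding i_def by (rule LeastI) (rule last)
  moreover have "rev u ! i' = 0" if "i' < i" for i'
  proof -
    have "\<not> 1 \<le> rev u ! i'" using that unfolding i_def by (rule not_less_Least)
    moreover have "0 \<le> rev u ! i'" using that \<open>i < r\<close> by (intro rev_u_nonneg) simp
    ultimately show ?thesis by simp
  qed
  ultimately show ?thesis using that by blast
qed

lemma excess_pos_of_u_nonzero: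
  assumes "\<exists>x\<in>set u. x \<noteq> 0"
  shows "1 \<le> excess"
proof -
  obtain i where i_r: "i < r" and i1: "1 \<le> rev u ! i" and below: "\<forall>i'<i. rev u ! i' = 0"
    using first_positive_rev_u[OF assms] .
  have "row_bonus (rev u ! i) (row_len i) \<le> (\<Sum>i<r. row_bonus (rev u ! i) (row_len i))"
    using i_r row_bonus_nonneg by (intro member_le_sum) auto
  then have bonus: "row_bonus (rev u ! i) (row_len i) + 2 * dom_weight \<le> excess"
    using sum_row_bonus_le_excess by simp
  consider "row_len i = 0" | "row_len i = 1" | "2 \<le> row_len i"
    using row_len_nonneg[OF i_r] by linarith
  then show ?thesis
  proof cases
    case 1
    then have "1 \<le> (\<Sum>l<Suc i. v ! l - row_len l)"
      using partial_sum_nonneg[of i] v_pos[OF i_r] i_r by simp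
    then have "1 \<le> dom_weight" using partial_sum_le_dom_weight[OF i_r] by linarith
    then show ?thesis using bonus row_bonus_nonneg[of "rev u ! i" "row_len i"] by linarith
  next
    case 2
    then show ?thesis using row_len_ne_1_at_first_nonzero[OF i_r i1 below] by simp
  next
    case 3
    then show ?thesis using bonus i1 dom_weight_nonneg by (simp add: row_bonus_def)
  qed
qed

end

theorem lemma5p10:
  fixes d r :: nat and u v w :: "int list" and b :: "nat \<times> int \<Rightarrow> nat \<times> int"
  assumes "1 \<le> r" and "r < d"
    and "is_partition u" and "length u = r" and "u ! 0 \<le> int (d - r)"
    and "is_partition v" and "length v = r" and "plen v = r"
    and "(w, b) \<in> LR r (chi u) v"
    and "admissible (w @ conj_part (d - r) u)"
  shows "((\<forall>x\<in>set u. x = 0) \<and> psi (w @ conj_part (d - r) u) = v @ replicate (d - r) 0)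
       \<or> psize u + int (inv_count (w @ conj_part (d - r) u)) + 1 + norm2 v
           \<le> norm2 (psi (w @ conj_part (d - r) u))"
proof -
  interpret admissible_LR_pair d r u v w b
    using assms by unfold_locales
  show ?thesis
  proof (cases "\<forall>x\<in>set u. x = 0")
    case u_zero: True
    show ?thesis
    proof (cases "dom_weight = 0")
      case True
      then show ?thesis using u_zero psi_of_u_zero by simp
    next
      case False
      then have "1 \<le> excess" using u_zero excess_of_u_zero dom_weight_nonneg by simp
      then show ?thesis using norm2_psi_bound_of_excess by simp
    qed
  next
    case False
    then show ?thesis using excess_pos_of_u_nonzero norm2_psi_bound_of_excess by simp
  qed
qed

end
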